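(* Let $n\ge 2$ and let $\mathbb{H}^n=\mathbb{R}^+\times\mathbb{R}^{n-1}=\{(t,x)\}$ be the hyperbolic upper-half space with metric $ds^2=\frac{1}{t^2}(dt^2+dx_1^2+\dots+dx_{n-1}^2)$. Let $h:\mathbb{R}^{n-1}\to\mathbb{C}$ be a non-constant function harmonic with respect to the Euclidean metric on $\mathbb{R}^{n-1}$, let $r\ge 1$ be an integer, and let $p_r:\mathbb{R}^+\to\mathbb{C}$ be given by $p_r(t)=(a_r+b_r t^{n-1})\cdot\log(t)^{r-1}$, where $(a_r,b_r)\in\mathbb{C}^2$ is non-zero. Then the function $f_r:\mathbb{H}^n\to\mathbb{C}$, $f_r(t,x)=p_r(t)\cdot h(x)$, is proper $r$-harmonic on $\mathbb{H}^n$.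
   Context: For a Riemannian manifold $(M,g)$ the Laplace–Beltrami operator (tension field) acts on complex-valued functions by $\tau(f)=\sum_{i,j}\frac{1}{\sqrt{|g|}}\frac{\partial}{\partial x_j}\bigl(g^{ij}\sqrt{|g|}\frac{\partial f}{\partial x_i}\bigr)$; on $\mathbb{H}^n$ this is $\tau(f)=t^2\sum_{k=1}^{n-1}\frac{\partial^2 f}{\partial x_k^2}+t^2\frac{\partial^2 f}{\partial t^2}-(n-2)t\frac{\partial f}{\partial t}$. Iterates: $\tau^0(f)=f$, $\tau^r(f)=\tau(\tau^{r-1}(f))$. A function $f$ is $r$-harmonic if $\tau^r(f)=0$, and proper $r$-harmonic if moreover $\tau^{r-1}(f)$ does not vanish identically. *)

theory Defs
  imports "HOL-Analysis.Analysis"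
begin

text \<open>Points of H^n are pairs (t,x) with t > 0 and x in R^(n-1); the coordinate space
  R^(n-1) is modelled as real^'m, so n = CARD('m) + 1 (hence n >= 2 automatically).
  Functions on H^n are represented as curried functions real => real^'m => complex;
  only their values at t > 0 matter.\<close>

definition dt1 :: "(real \<Rightarrow> real^'m \<Rightarrow> complex) \<Rightarrow> real \<Rightarrow> real^'m \<Rightarrow> complex" where
  "dt1 f t x = vector_derivative (\<lambda>s. f s x) (at t)"

definition dt2 :: "(real \<Rightarrow> real^'m \<Rightarrow> complex) \<Rightarrow> real \<Rightarrow> real^'m \<Rightarrow> complex" where
  "dt2 f t x = vector_derivative (\<lambda>s. vector_derivative (\<lambda>u. f u x) (at s)) (at t)"

definition dx2 :: "'m::finite \<Rightarrow> (real^'m \<Rightarrow> complex) \<Rightarrow> real^'m \<Rightarrow> complex" where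
  "dx2 k g x = vector_derivative
      (\<lambda>u. vector_derivative (\<lambda>v. g (x + v *\<^sub>R axis k 1)) (at u)) (at 0)"

definition eucl_laplacian :: "(real^'m::finite \<Rightarrow> complex) \<Rightarrow> real^'m \<Rightarrow> complex" where
  "eucl_laplacian g x = (\<Sum>k\<in>UNIV. dx2 k g x)"

definition C2 :: "(real^'m::finite \<Rightarrow> complex) \<Rightarrow> bool" where
  "C2 g \<longleftrightarrow> (\<exists>D1 D2. (\<forall>x. (g has_derivative D1 x) (at x)) \<and>
      (\<forall>x v. ((\<lambda>y. D1 y v) has_derivative D2 x v) (at x)) \<and>
      (\<forall>v w. continuous_on UNIV (\<lambda>x. D2 x v w)))"

definition eucl_harmonic :: "(real^'m::finite \<Rightarrow> complex) \<Rightarrow> bool" where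
  "eucl_harmonic g \<longleftrightarrow> C2 g \<and> (\<forall>x. eucl_laplacian g x = 0)"

definition tension :: "(real \<Rightarrow> real^'m::finite \<Rightarrow> complex) \<Rightarrow> real \<Rightarrow> real^'m \<Rightarrow> complex" where
  "tension f t x =
     complex_of_real (t^2) * (\<Sum>k\<in>UNIV. dx2 k (f t) x)
     + complex_of_real (t^2) * dt2 f t x
     - complex_of_real ((real CARD('m) + 1 - 2) * t) * dt1 f t x"

definition r_harmonic :: "nat \<Rightarrow> (real \<Rightarrow> real^'m::finite \<Rightarrow> complex) \<Rightarrow> bool" where
  "r_harmonic r f \<longleftrightarrow> (\<forall>t>0. \<forall>x. (tension ^^ r) f t x = 0)"

definition proper_r_harmonic :: "nat \<Rightarrow> (real \<Rightarrow> real^'m::finite \<Rightarrow> complex) \<Rightarrow> bool" where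
  "proper_r_harmonic r f \<longleftrightarrow> r_harmonic r f \<and>
     (\<exists>t>0. \<exists>x. (tension ^^ (r - 1)) f t x \<noteq> 0)"

end

theory Submission
  imports Defs "HOL-Computational_Algebra.Polynomial"
begin

text \<open>With s = ln t and D = t d/dt, the tension field of p(t) h(x), for h harmonic, is
  ((D^2 - (n - 1) D) p)(t) h(x). On profiles p(t) = A(ln t) + t^(n-1) B(ln t) with polynomials
  A and B this acts by A \<mapsto> A'' - (n - 1) A' and B \<mapsto> B'' + (n - 1) B', both of which lower
  the degree by exactly one. Starting from A = a s^(r-1) and B = b s^(r-1), the (r-1)-st iterate
  leaves constants c and d, non-zero multiples of a and b, so tau^(r-1) f = (c + d t^(n-1)) h
  does not vanish identically, while the r-th iterate vanishes.\<close>

definition radial_op :: "complex \<Rightarrow> complex poly \<Rightarrow> complex poly" where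
  "radial_op c A = pderiv (pderiv A) + smult c (pderiv A)"

lemma radial_op_const [simp]: "radial_op c [:z:] = 0"
  by (simp add: radial_op_def pderiv_pCons)

lemma degree_radial_op_le:
  assumes "degree A \<le> Suc d"
  shows "degree (radial_op c A) \<le> d"
proof -
  have "degree (pderiv (pderiv A)) \<le> d" "degree (smult c (pderiv A)) \<le> d"
    using assms degree_smult_le[of c "pderiv A"] by (simp_all add: degree_pderiv)
  then show ?thesis
    unfolding radial_op_def by (metis degree_add_le)
qed

lemma coeff_radial_op_top:
  assumes "degree A \<le> Suc d"
  shows "coeff (radial_op c A) d = c * of_nat (Suc d) * coeff A (Suc d)"
proof -
  have "coeff A (Suc (Suc d)) = 0"
    using assms by (intro coeff_eq_0) auto
  then show ?thesis
    by (simp add: radial_op_def coeff_pderiv)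
qed

lemma radial_op_funpow:
  "degree A \<le> d \<Longrightarrow> (radial_op c ^^ d) A = [:coeff A d * c ^ d * fact d:]"
proof (induction d arbitrary: A)
  case 0
  then show ?case using degree_0_id[of A] by simp
next
  case (Suc d)
  have "(radial_op c ^^ Suc d) A = (radial_op c ^^ d) (radial_op c A)"
    by (simp add: funpow_Suc_right del: funpow.simps)
  also have "\<dots> = [:coeff (radial_op c A) d * c ^ d * fact d:]"
    using Suc.IH[OF degree_radial_op_le[OF Suc.prems]] .
  also have "\<dots> = [:coeff A (Suc d) * c ^ Suc d * fact (Suc d):]"
    by (simp add: coeff_radial_op_top[OF Suc.prems] fact_Suc algebra_simps)
  finally show ?case .
qed

lemma radial_op_funpow_Suc_eq_0:
  "degree A \<le> d \<Longrightarrow> (radial_op c ^^ Suc d) A = 0"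
  by (simp add: radial_op_funpow)

definition radial_profile :: "nat \<Rightarrow> complex poly \<Rightarrow> complex poly \<Rightarrow> real \<Rightarrow> complex" where
  "radial_profile m A B t = poly A (of_real (ln t)) + of_real (t ^ m) * poly B (of_real (ln t))"

lemma radial_profile_0 [simp]: "radial_profile m 0 0 t = 0"
  by (simp add: radial_profile_def)

lemma radial_profile_const [simp]:
  "radial_profile m [:c:] [:d:] t = c + of_real (t ^ m) * d"
  by (simp add: radial_profile_def)

text \<open>The polynomial part of the derivative of s \<mapsto> e^(m s) B(s).\<close>
definition shift_pderiv :: "nat \<Rightarrow> complex poly \<Rightarrow> complex poly" where
  "shift_pderiv m B = pderiv B + smult (of_nat m) B"

lemma radial_profile_shift_pderiv_radial_op:
  "radial_profile m (pderiv (pderiv A)) (shift_pderiv m (shift_pderiv m B)) t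
     - of_nat m * radial_profile m (pderiv A) (shift_pderiv m B) t
   = radial_profile m (radial_op (- of_nat m) A) (radial_op (of_nat m) B) t"
  by (simp add: radial_profile_def shift_pderiv_def radial_op_def pderiv_add pderiv_smult
      algebra_simps)

lemma has_vector_derivative_radial_profile:
  assumes "t > 0"
  shows "(radial_profile m A B has_vector_derivative
           radial_profile m (pderiv A) (shift_pderiv m B) t / of_real t) (at t)"
proof -
  have ln: "((\<lambda>s. complex_of_real (ln s)) has_vector_derivative of_real (inverse t)) (at t)"
    by (intro has_vector_derivative_of_real DERIV_ln assms)
  have poly_ln: "((\<lambda>s. poly P (of_real (ln s))) has_vector_derivative
      of_real (inverse t) * poly (pderiv P) (of_real (ln t))) (at t)" for P :: "complex poly"
    using field_vector_diff_chain_at[OF ln poly_DERIV, of P] by (simp add: o_def)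
  have pow: "((\<lambda>s. complex_of_real (s ^ m)) has_vector_derivative
      of_real (of_nat m * t ^ (m - Suc 0))) (at t)"
    by (intro has_vector_derivative_of_real DERIV_pow)
  have "(radial_profile m A B has_vector_derivative
      of_real (inverse t) * poly (pderiv A) (of_real (ln t)) +
      (of_real (t ^ m) * (of_real (inverse t) * poly (pderiv B) (of_real (ln t)))
       + of_real (of_nat m * t ^ (m - Suc 0)) * poly B (of_real (ln t)))) (at t)"
    unfolding radial_profile_def[abs_def]
    by (intro has_vector_derivative_add has_vector_derivative_mult poly_ln pow)
  moreover have "of_real (inverse t) * poly (pderiv A) (of_real (ln t)) +
      (of_real (t ^ m) * (of_real (inverse t) * poly (pderiv B) (of_real (ln t)))
       + of_real (of_nat m * t ^ (m - Suc 0)) * poly B (of_real (ln t)))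
    = radial_profile m (pderiv A) (shift_pderiv m B) t / of_real t"
    using assms by (cases m) (auto simp: radial_profile_def shift_pderiv_def field_simps)
  ultimately show ?thesis by simp
qed

lemma has_vector_derivative_radial_profile_div:
  assumes "t > 0"
  shows "((\<lambda>s. radial_profile m A B s / of_real s) has_vector_derivative
           (radial_profile m (pderiv A) (shift_pderiv m B) t - radial_profile m A B t)
             / of_real (t ^ 2)) (at t)"
proof -
  define P where "P = radial_profile m A B"
  define P1 where "P1 = radial_profile m (pderiv A) (shift_pderiv m B)"
  have inv: "((\<lambda>s. complex_of_real (inverse s)) has_vector_derivative
      of_real (- (inverse t ^ Suc (Suc 0)))) (at t)"
    using assms by (intro has_vector_derivative_of_real DERIV_inverse) auto
  have "((\<lambda>s. P s * of_real (inverse s)) has_vector_derivative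
      P t * of_real (- (inverse t ^ Suc (Suc 0))) + P1 t / of_real t * of_real (inverse t)) (at t)"
    unfolding P_def P1_def
    by (intro has_vector_derivative_mult has_vector_derivative_radial_profile assms inv)
  moreover have "P t * of_real (- (inverse t ^ Suc (Suc 0))) + P1 t / of_real t * of_real (inverse t)
      = (P1 t - P t) / of_real (t ^ 2)"
    using assms by (simp add: field_simps power2_eq_square)
  ultimately show ?thesis
    by (simp add: P_def P1_def divide_inverse)
qed

lemma dx2_eq_second_derivative:
  fixes g :: "real^'m::finite \<Rightarrow> complex"
  assumes d1: "\<And>y. (g has_derivative D1 y) (at y)"
    and d2: "\<And>y v. ((\<lambda>z. D1 z v) has_derivative D2 y v) (at y)"
  shows "dx2 k g x = D2 x (axis k 1) (axis k 1)"
proof -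
  let ?e = "axis k (1::real) :: real^'m"
  have line: "((\<lambda>v. x + v *\<^sub>R ?e) has_derivative (\<lambda>w. w *\<^sub>R ?e)) (at u)" for u
    by (auto intro!: derivative_eq_intros)
  have inner: "((\<lambda>v. g (x + v *\<^sub>R ?e)) has_vector_derivative D1 (x + u *\<^sub>R ?e) ?e) (at u)" for u
    using has_derivative_compose[OF line d1] linear_cmul[OF has_derivative_linear[OF d1]]
    by (simp add: has_vector_derivative_def)
  have outer: "((\<lambda>u. D1 (x + u *\<^sub>R ?e) ?e) has_vector_derivative D2 x ?e ?e) (at 0)"
    using has_derivative_compose[OF line[of 0] d2[where y = "x + 0 *\<^sub>R ?e" and v = ?e]]
      linear_cmul[OF has_derivative_linear[OF d2]]
    by (simp add: has_vector_derivative_def)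
  show ?thesis
    unfolding dx2_def using vector_derivative_at[OF inner] vector_derivative_at[OF outer] by simp
qed

lemma eucl_laplacian_cmult:
  fixes g :: "real^'m::finite \<Rightarrow> complex"
  assumes "C2 g"
  shows "eucl_laplacian (\<lambda>y. c * g y) x = c * eucl_laplacian g x"
proof -
  from assms obtain D1 D2 where d1: "\<And>y. (g has_derivative D1 y) (at y)"
    and d2: "\<And>y v. ((\<lambda>z. D1 z v) has_derivative D2 y v) (at y)"
    unfolding C2_def by blast
  have cd1: "((\<lambda>y. c * g y) has_derivative (\<lambda>v. c * D1 y v)) (at y)" for y
    using has_derivative_mult_right[OF d1] .
  have cd2: "((\<lambda>z. c * D1 z v) has_derivative (\<lambda>w. c * D2 y v w)) (at y)" for y v
    using has_derivative_mult_right[OF d2] .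
  show ?thesis
    unfolding eucl_laplacian_def dx2_eq_second_derivative[OF cd1 cd2]
      dx2_eq_second_derivative[OF d1 d2] by (simp add: sum_distrib_left)
qed

lemma dt1_product:
  assumes G: "\<forall>s>0. \<forall>y. G s y = F s * h y"
    and F: "(F has_vector_derivative F') (at t)" and "t > 0"
  shows "dt1 G t x = F' * h x"
proof -
  have "((\<lambda>s. G s x) has_vector_derivative F' * h x) (at t)"
    by (rule has_vector_derivative_transform_within_open[of "\<lambda>s. F s * h x" _ _ "{0<..}"])
      (use has_vector_derivative_mult_left[OF F] G \<open>t > 0\<close> in auto)
  then show ?thesis
    unfolding dt1_def by (rule vector_derivative_at)
qed

lemma dt2_product:
  assumes G: "\<forall>s>0. \<forall>y. G s y = F s * h y"
    and F: "\<And>s. s > 0 \<Longrightarrow> (F has_vector_derivative F' s) (at s)"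
    and F': "(F' has_vector_derivative F'') (at t)" and "t > 0"
  shows "dt2 G t x = F'' * h x"
proof -
  have "((\<lambda>s. dt1 G s x) has_vector_derivative F'' * h x) (at t)"
    by (rule has_vector_derivative_transform_within_open[of "\<lambda>s. F' s * h x" _ _ "{0<..}"])
      (use has_vector_derivative_mult_left[OF F'] dt1_product[OF G F] \<open>t > 0\<close> in auto)
  then show ?thesis
    unfolding dt2_def dt1_def by (rule vector_derivative_at)
qed

lemma tension_radial_profile:
  fixes G :: "real \<Rightarrow> real^'m::finite \<Rightarrow> complex"
  assumes h: "eucl_harmonic h"
    and G: "\<forall>s>0. \<forall>y. G s y = radial_profile CARD('m) A B s * h y" and t: "t > 0"
  shows "tension G t x = radial_profile CARD('m)
           (radial_op (- of_nat CARD('m)) A) (radial_op (of_nat CARD('m)) B) t * h x"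
proof -
  define m where "m = CARD('m)"
  define P where "P = radial_profile m A B"
  define P1 where "P1 = radial_profile m (pderiv A) (shift_pderiv m B)"
  define P2 where "P2 = radial_profile m (pderiv (pderiv A)) (shift_pderiv m (shift_pderiv m B))"
  have "G t = (\<lambda>y. P t * h y)"
    using G t by (auto simp: P_def m_def)
  then have x_part: "(\<Sum>k\<in>UNIV. dx2 k (G t) x) = 0"
    using h eucl_laplacian_cmult[of h "P t" x]
    by (simp add: eucl_harmonic_def eucl_laplacian_def)
  have G': "\<forall>s>0. \<forall>y. G s y = P s * h y"
    using G by (simp add: P_def m_def)
  have P': "(P has_vector_derivative P1 s / of_real s) (at s)" if "s > 0" for s
    unfolding P_def P1_def using has_vector_derivative_radial_profile[OF that] .
  have dt1: "dt1 G t x = P1 t / of_real t * h x"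
    by (rule dt1_product[OF G' P'[OF t] t])
  have P'': "((\<lambda>s. P1 s / of_real s) has_vector_derivative (P2 t - P1 t) / of_real (t ^ 2)) (at t)"
    unfolding P1_def P2_def by (rule has_vector_derivative_radial_profile_div[OF t])
  have dt2: "dt2 G t x = (P2 t - P1 t) / of_real (t ^ 2) * h x"
    by (rule dt2_product[OF G' P' P'' t])
  have "tension G t x = of_real (t ^ 2) * dt2 G t x - of_real ((real m - 1) * t) * dt1 G t x"
    unfolding tension_def x_part m_def by simp
  also have "\<dots> = (P2 t - P1 t) * h x - (of_nat m - 1) * P1 t * h x"
    unfolding dt1 dt2 using t by simp
  also have "\<dots> = (P2 t - of_nat m * P1 t) * h x"
    by (simp add: algebra_simps)
  also have "\<dots> = radial_profile m (radial_op (- of_nat m) A) (radial_op (of_nat m) B) t * h x"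
    unfolding P1_def P2_def radial_profile_shift_pderiv_radial_op ..
  finally show ?thesis unfolding m_def .
qed

lemma funpow_tension_radial_profile:
  fixes h :: "real^'m::finite \<Rightarrow> complex"
  assumes "eucl_harmonic h" and "t > 0"
  shows "(tension ^^ k) (\<lambda>s y. radial_profile CARD('m) A B s * h y) t x
    = radial_profile CARD('m) ((radial_op (- of_nat CARD('m)) ^^ k) A)
        ((radial_op (of_nat CARD('m)) ^^ k) B) t * h x"
  using assms(2)
proof (induction k arbitrary: t x)
  case 0
  then show ?case by simp
next
  case (Suc k)
  then show ?case
    using tension_radial_profile[OF assms(1), of "(tension ^^ k) _"] by simp
qed

lemma exists_pos_add_power_mult_neq_0:
  assumes "(c, d) \<noteq> (0, 0)" and "m \<ge> 1"
  shows "\<exists>t>0. c + complex_of_real (t ^ m) * d \<noteq> 0"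
proof (cases "c + d = 0")
  case False
  then show ?thesis by (intro exI[of _ 1]) auto
next
  case True
  have "(1::real) < 2 ^ m"
    using assms(2) by (intro one_less_power) auto
  then have "complex_of_real (2 ^ m) \<noteq> 1"
    by (metis less_irrefl of_real_eq_1_iff)
  moreover have "d \<noteq> 0"
    using True assms(1) by auto
  moreover have "c + of_real (2 ^ m) * d = d * (of_real (2 ^ m) - 1)"
    using True by (simp add: algebra_simps eq_neg_iff_add_eq_0[symmetric])
  ultimately show ?thesis
    by (intro exI[of _ 2]) auto
qed

theorem theorem3p3:
  fixes h :: "real^'m::finite \<Rightarrow> complex"
    and r :: nat and a b :: complex
  assumes "eucl_harmonic h"
    and "\<not> (\<exists>c. \<forall>x. h x = c)"
    and "r \<ge> 1"
    and "(a, b) \<noteq> (0, 0)"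
  shows "proper_r_harmonic r
           (\<lambda>t x. ((a + b * complex_of_real (t ^ CARD('m))) * complex_of_real (ln t ^ (r - 1))) * h x)"
proof -
  let ?m = "CARD('m)"
  obtain k where r: "r = Suc k"
    using assms(3) by (cases r) auto
  let ?A = "monom a k" and ?B = "monom b k"
  let ?f = "\<lambda>t x. radial_profile ?m ?A ?B t * h x"
  have f: "(\<lambda>t x. ((a + b * complex_of_real (t ^ ?m)) * complex_of_real (ln t ^ k)) * h x) = ?f"
    by (auto simp: radial_profile_def poly_monom algebra_simps)
  note iterate = funpow_tension_radial_profile[OF assms(1), where A = ?A and B = ?B]
  have "r_harmonic (Suc k) ?f"
    by (simp add: r_harmonic_def iterate radial_op_funpow_Suc_eq_0 degree_monom_le del: funpow.simps)
  define c where "c = a * (- of_nat ?m) ^ k * fact k"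
  define d where "d = b * of_nat ?m ^ k * fact k"
  have "(c, d) \<noteq> (0, 0)"
    using assms(4) by (auto simp: c_def d_def)
  then obtain t where "t > 0" and "c + of_real (t ^ ?m) * d \<noteq> 0"
    using exists_pos_add_power_mult_neq_0[of c d ?m] by (auto simp: Suc_leI)
  moreover obtain x where "h x \<noteq> 0"
    using assms(2) by auto
  ultimately have "(tension ^^ k) ?f t x \<noteq> 0"
    by (simp add: iterate radial_op_funpow degree_monom_le c_def d_def)
  with \<open>r_harmonic (Suc k) ?f\<close> \<open>t > 0\<close> show ?thesis
    unfolding r f proper_r_harmonic_def diff_Suc_1 by blast
qed

end
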